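(* Let $d\geq2$, let $\omega\in\mathbb{R}^d$ be non-resonant (i.e. $\langle\omega,k\rangle\neq0$ for all $k\in\mathbb{Z}^d\setminus\{0\}$), and let $(k_n)$ be a sequence in $\mathbb{Z}^d$ with $|k_n|\to\infty$ and $|\langle\omega,k_n\rangle|<C/|k_n|^{d-1}$ for a constant $C$ independent of $n$. Then (for $n$ large enough) there exists an integer vector $k_n'\in\mathbb{Z}^d$ such that $$\langle k_n,k_n'\rangle=0,\qquad |k_n'|\sim|k_n|,\qquad |\langle k_n',\omega\rangle|\sim|k_n|.$$
   Context: $|\cdot|$ is the Euclidean norm. The notation $f\sim g$ means $\frac1{C'}g<f<C'g$ for some constant $C'>1$ independent of $n$. *)

theory Defs
  imports "HOL-Analysis.Analysis"
begin

definition ivec :: "int ^ 'd \<Rightarrow> real ^ 'd" where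
  "ivec k = (\<chi> i. real_of_int (k $ i))"

definition non_resonant :: "real ^ 'd \<Rightarrow> bool" where
  "non_resonant \<omega> \<longleftrightarrow> (\<forall>k::int ^ 'd. k \<noteq> 0 \<longrightarrow> \<omega> \<bullet> ivec k \<noteq> 0)"

end

theory Submission
  imports Defs
begin

text \<open>
  Let \<open>x = k\<close> (as a real vector) and pick a component \<open>i\<close> of maximal modulus, so
  \<open>|x\<^sub>i| \<ge> |x|/d\<close>. The vector \<open>v = \<omega>\<^sub>i x - x\<^sub>i \<omega>\<close> satisfies
  \<open>\<langle>\<omega>,v\<rangle> = \<omega>\<^sub>i \<langle>x,\<omega>\<rangle> - x\<^sub>i |\<omega>|\<^sup>2\<close>; as \<open>\<langle>x,\<omega>\<rangle>\<close> stays bounded while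
  \<open>|x|\<close> grows, this forces \<open>|v| \<ge> c |x| |\<omega>|\<close>, hence some component \<open>v\<^sub>j\<close> with
  \<open>|v\<^sub>j| \<ge> c' |x|\<close>. The integer vector \<open>k' = k\<^sub>j e\<^sub>i - k\<^sub>i e\<^sub>j\<close> is orthogonal to \<open>k\<close>,
  has norm between \<open>|k\<^sub>i|\<close> and \<open>2|k|\<close>, and \<open>\<langle>k',\<omega>\<rangle> = v\<^sub>j\<close>.
\<close>

lemma obtain_argmax_finite_type:
  fixes f :: "'a::finite \<Rightarrow> 'b::linorder"
  obtains i where "\<And>l. f l \<le> f i"
proof -
  have "Max (range f) \<in> range f" by (rule Max_in) auto
  then obtain i where "f i = Max (range f)" by (metis rangeE)
  moreover have "\<And>l. f l \<le> Max (range f)" by (rule Max_ge) auto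
  ultimately show ?thesis using that[of i] by simp
qed

lemma norm_le_card_mult_max_component:
  fixes x :: "real ^ 'n"
  assumes "\<And>l. \<bar>x$l\<bar> \<le> \<bar>x$i\<bar>"
  shows "norm x \<le> real CARD('n) * \<bar>x$i\<bar>"
proof -
  have "norm x \<le> (\<Sum>l\<in>UNIV. \<bar>x$l\<bar>)" by (rule norm_le_l1_cart)
  also have "\<dots> \<le> (\<Sum>l\<in>(UNIV::'n set). \<bar>x$i\<bar>)" by (rule sum_mono) (rule assms)
  finally show ?thesis by simp
qed

lemma abs_component_mult_norm_le:
  fixes x \<omega> :: "real ^ 'n"
  shows "\<bar>x$i\<bar> * norm \<omega> \<le> \<bar>x \<bullet> \<omega>\<bar> + norm (\<omega>$i *\<^sub>R x - x$i *\<^sub>R \<omega>)"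
proof (cases "\<omega> = 0")
  case False
  let ?v = "\<omega>$i *\<^sub>R x - x$i *\<^sub>R \<omega>"
  have "x$i * (norm \<omega>)\<^sup>2 = \<omega>$i * (x \<bullet> \<omega>) - \<omega> \<bullet> ?v"
    by (simp add: inner_diff_right power2_norm_eq_inner inner_commute)
  then have "\<bar>x$i\<bar> * (norm \<omega>)\<^sup>2 \<le> \<bar>\<omega>$i\<bar> * \<bar>x \<bullet> \<omega>\<bar> + \<bar>\<omega> \<bullet> ?v\<bar>"
    by (metis abs_mult abs_of_nonneg abs_triangle_ineq4 zero_le_power2)
  also have "\<dots> \<le> norm \<omega> * \<bar>x \<bullet> \<omega>\<bar> + norm \<omega> * norm ?v"
    by (intro add_mono mult_right_mono component_le_norm_cart Cauchy_Schwarz_ineq2) auto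
  finally have "norm \<omega> * (\<bar>x$i\<bar> * norm \<omega>) \<le> norm \<omega> * (\<bar>x \<bullet> \<omega>\<bar> + norm ?v)"
    by (simp add: power2_eq_square algebra_simps)
  then show ?thesis using False by simp
qed simp

lemma ivec_0 [simp]: "ivec 0 = 0"
  by (simp add: ivec_def vec_eq_iff)

lemma norm_axis_real: "norm (axis i (c::real) :: real ^ 'n) = \<bar>c\<bar>"
proof -
  have "axis i c = c *\<^sub>R (axis i 1 :: real ^ 'n)" by (simp add: vec_eq_iff axis_def)
  then show ?thesis by simp
qed

lemma planar_orthogonal_ivec:
  fixes k :: "int ^ 'n" and \<omega> :: "real ^ 'n" and i j :: 'n
  defines "k' \<equiv> axis i (k$j) - axis j (k$i)"
  shows "ivec k \<bullet> ivec k' = 0"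
    and "ivec k' \<bullet> \<omega> = (\<omega>$i *\<^sub>R ivec k - (ivec k)$i *\<^sub>R \<omega>) $ j"
    and "j \<noteq> i \<Longrightarrow> \<bar>(ivec k)$i\<bar> \<le> norm (ivec k')"
    and "norm (ivec k') \<le> 2 * norm (ivec k)"
proof -
  have k': "ivec k' = axis i ((ivec k)$j) - axis j ((ivec k)$i)"
    by (simp add: k'_def ivec_def axis_def vec_eq_iff)
  show "ivec k \<bullet> ivec k' = 0"
    by (simp add: k' inner_diff_right inner_axis)
  show "ivec k' \<bullet> \<omega> = (\<omega>$i *\<^sub>R ivec k - (ivec k)$i *\<^sub>R \<omega>) $ j"
    by (simp add: k' inner_diff_left inner_commute[of "axis _ _"] inner_axis mult.commute)
  show "\<bar>(ivec k)$i\<bar> \<le> norm (ivec k')" if "j \<noteq> i"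
    using component_le_norm_cart[of "ivec k'" j] that by (simp add: k' axis_def)
  have "norm (ivec k') \<le> \<bar>(ivec k)$j\<bar> + \<bar>(ivec k)$i\<bar>"
    unfolding k' by (metis norm_axis_real norm_triangle_ineq4)
  also have "\<dots> \<le> 2 * norm (ivec k)"
    using component_le_norm_cart[of "ivec k" i] component_le_norm_cart[of "ivec k" j] by simp
  finally show "norm (ivec k') \<le> 2 * norm (ivec k)" .
qed

lemma exists_orthogonal_ivec_comparable:
  fixes \<omega> :: "real ^ 'n" and k :: "int ^ 'n"
  defines "D \<equiv> real CARD('n)"
  assumes "\<omega> \<noteq> 0" and "k \<noteq> 0"
    and small: "\<bar>\<omega> \<bullet> ivec k\<bar> \<le> c"
    and large: "2 * D * c \<le> norm (ivec k) * norm \<omega>"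
  shows "\<exists>k'::int ^ 'n. ivec k \<bullet> ivec k' = 0 \<and>
           norm (ivec k) / D \<le> norm (ivec k') \<and> norm (ivec k') \<le> 2 * norm (ivec k) \<and>
           norm (ivec k) * norm \<omega> / (2 * D\<^sup>2) \<le> \<bar>ivec k' \<bullet> \<omega>\<bar> \<and>
           \<bar>ivec k' \<bullet> \<omega>\<bar> \<le> 2 * norm (ivec k) * norm \<omega>"
proof -
  define x where "x = ivec k"
  have D1: "D \<ge> 1" unfolding D_def by simp
  have "x \<noteq> 0" using \<open>k \<noteq> 0\<close> by (simp add: x_def ivec_def vec_eq_iff)
  then have pos: "norm x * norm \<omega> > 0" using \<open>\<omega> \<noteq> 0\<close> by simp
  obtain i where imax: "\<And>l. \<bar>x$l\<bar> \<le> \<bar>x$i\<bar>"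
    using obtain_argmax_finite_type[of "\<lambda>l. \<bar>x$l\<bar>"] by blast
  define v where "v = \<omega>$i *\<^sub>R x - x$i *\<^sub>R \<omega>"
  obtain j where jmax: "\<And>l. \<bar>v$l\<bar> \<le> \<bar>v$j\<bar>"
    using obtain_argmax_finite_type[of "\<lambda>l. \<bar>v$l\<bar>"] by blast
  have xi: "norm x \<le> D * \<bar>x$i\<bar>"
    unfolding D_def by (rule norm_le_card_mult_max_component) (rule imax)
  have "norm x * norm \<omega> \<le> D * (\<bar>x$i\<bar> * norm \<omega>)"
    using mult_right_mono[OF xi, of "norm \<omega>"] by simp
  also have "\<dots> \<le> D * (c + D * \<bar>v$j\<bar>)"
    using abs_component_mult_norm_le[of x i \<omega>] small D1
      norm_le_card_mult_max_component[of v j, OF jmax]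
    by (intro mult_left_mono) (auto simp: v_def x_def D_def inner_commute)
  finally have vj: "norm x * norm \<omega> / (2 * D\<^sup>2) \<le> \<bar>v$j\<bar>"
    using large D1 by (simp add: x_def field_simps power2_eq_square)
  with pos D1 have "v$j \<noteq> 0"
    by (smt (verit) divide_pos_pos zero_less_power)
  then have "j \<noteq> i" by (auto simp: v_def)
  define k' where "k' = axis i (k$j) - axis j (k$i)"
  note k' = planar_orthogonal_ivec[where k=k and i=i and j=j, folded k'_def x_def]
  have k'_omega: "ivec k' \<bullet> \<omega> = v$j" using k'(2) by (simp add: v_def)
  have "norm x \<le> D * norm (ivec k')"
    using xi mult_left_mono[OF k'(3)[OF \<open>j \<noteq> i\<close>], of D] D1 by linarith
  then have "norm x / D \<le> norm (ivec k')"
    using D1 by (simp add: divide_le_eq mult.commute)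
  moreover have "\<bar>ivec k' \<bullet> \<omega>\<bar> \<le> 2 * norm x * norm \<omega>"
    using Cauchy_Schwarz_ineq2[of "ivec k'" \<omega>] mult_right_mono[OF k'(4), of "norm \<omega>"]
    by simp
  ultimately show ?thesis
    using k'(1,4) k'_omega vj unfolding x_def by (intro exI[of _ k']) auto
qed

lemma non_resonant_nonzero:
  fixes \<omega> :: "real ^ 'n"
  assumes "non_resonant \<omega>"
  shows "\<omega> \<noteq> 0"
proof
  assume "\<omega> = 0"
  moreover have "axis undefined 1 \<noteq> (0 :: int ^ 'n)" by (simp add: axis_eq_0_iff)
  ultimately show False
    using assms[unfolded non_resonant_def, rule_format, of "axis undefined 1"] by simp
qed

lemma abs_le_abs_if_less_div_power:
  fixes t y C :: real
  assumes "y \<ge> 1" and "\<bar>t\<bar> < C / y ^ m"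
  shows "\<bar>t\<bar> \<le> \<bar>C\<bar>"
proof -
  have "C / y ^ m \<le> \<bar>C\<bar>"
  proof (cases "C \<ge> 0")
    case True
    then have "C / y ^ m \<le> C / 1"
      using assms(1) by (intro divide_left_mono) auto
    then show ?thesis by simp
  next
    case False
    then have "C / y ^ m \<le> 0" using assms(1) by (intro divide_nonpos_pos) auto
    then show ?thesis by simp
  qed
  then show ?thesis using assms(2) by linarith
qed

lemma two_sided_bounds_strict:
  fixes y z a b c :: real
  assumes "y > 0" "a > 0" "a < c" "b < c" "y / a \<le> z" "z \<le> b * y"
  shows "y / c < z \<and> z < c * y"
proof
  show "y / c < z" using assms by (smt (verit) divide_strict_left_mono mult_pos_pos)
  show "z < c * y" using assms by (smt (verit) mult_strict_right_mono)
qed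

lemma exists_orthogonal_ivec_strict:
  fixes \<omega> :: "real ^ 'n" and k :: "int ^ 'n"
  defines "D \<equiv> real CARD('n)"
  assumes "\<omega> \<noteq> 0" and "k \<noteq> 0"
    and small: "\<bar>\<omega> \<bullet> ivec k\<bar> \<le> c"
    and large: "2 * D * c \<le> norm (ivec k) * norm \<omega>"
    and C': "D < C'" "2 < C'" "2 * D\<^sup>2 / norm \<omega> < C'" "2 * norm \<omega> < C'"
  shows "\<exists>k'::int ^ 'n. ivec k \<bullet> ivec k' = 0 \<and>
           norm (ivec k) / C' < norm (ivec k') \<and> norm (ivec k') < C' * norm (ivec k) \<and>
           norm (ivec k) / C' < \<bar>ivec k' \<bullet> \<omega>\<bar> \<and> \<bar>ivec k' \<bullet> \<omega>\<bar> < C' * norm (ivec k)"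
proof -
  let ?y = "norm (ivec k)" and ?a = "2 * D\<^sup>2 / norm \<omega>"
  obtain k' where k': "ivec k \<bullet> ivec k' = 0"
      "?y / D \<le> norm (ivec k')" "norm (ivec k') \<le> 2 * ?y"
      "?y / ?a \<le> \<bar>ivec k' \<bullet> \<omega>\<bar>" "\<bar>ivec k' \<bullet> \<omega>\<bar> \<le> 2 * norm \<omega> * ?y"
    using exists_orthogonal_ivec_comparable[OF assms(2-5)[unfolded D_def]]
    unfolding D_def by (auto simp: field_simps)
  have "?y > 0" using \<open>k \<noteq> 0\<close> by (simp add: ivec_def vec_eq_iff)
  moreover have "D > 0" "?a > 0" using \<open>\<omega> \<noteq> 0\<close> by (simp_all add: D_def)
  ultimately show ?thesis
    using two_sided_bounds_strict[of ?y D C' 2 "norm (ivec k')"]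
      two_sided_bounds_strict[of ?y ?a C' "2 * norm \<omega>" "\<bar>ivec k' \<bullet> \<omega>\<bar>"] k' C'
    by blast
qed

theorem lemma3p1:
  fixes \<omega> :: "real ^ 'd" and k :: "nat \<Rightarrow> int ^ 'd" and C :: real
  assumes dim: "CARD('d) \<ge> 2"
    and nr: "non_resonant \<omega>"
    and lim: "filterlim (\<lambda>n. norm (ivec (k n))) at_top sequentially"
    and small: "\<forall>\<^sub>F n in sequentially.
                  \<bar>\<omega> \<bullet> ivec (k n)\<bar> < C / norm (ivec (k n)) ^ (CARD('d) - 1)"
  shows "\<exists>C'>1. \<exists>N. \<forall>n\<ge>N. \<exists>k'::int ^ 'd.
           ivec (k n) \<bullet> ivec k' = 0 \<and>
           norm (ivec (k n)) / C' < norm (ivec k') \<and> norm (ivec k') < C' * norm (ivec (k n)) \<and>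
           norm (ivec (k n)) / C' < \<bar>ivec k' \<bullet> \<omega>\<bar> \<and> \<bar>ivec k' \<bullet> \<omega>\<bar> < C' * norm (ivec (k n))"
proof -
  have "\<omega> \<noteq> 0" using nr by (rule non_resonant_nonzero)
  then have "norm \<omega> > 0" by simp
  define D where "D = real CARD('d)"
  define C' where "C' = D + 2 * D\<^sup>2 / norm \<omega> + 2 * norm \<omega> + 3"
  have C'_gt: "1 < C'" "D < C'" "2 < C'" "2 * D\<^sup>2 / norm \<omega> < C'" "2 * norm \<omega> < C'"
    using \<open>norm \<omega> > 0\<close> unfolding C'_def D_def by (auto intro: add_pos_nonneg)
  have "\<forall>\<^sub>F n in sequentially. max 1 (2 * D * \<bar>C\<bar> / norm \<omega>) \<le> norm (ivec (k n))"
    using lim unfolding filterlim_at_top by blast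
  then have "\<forall>\<^sub>F n in sequentially. \<exists>k'::int ^ 'd.
           ivec (k n) \<bullet> ivec k' = 0 \<and>
           norm (ivec (k n)) / C' < norm (ivec k') \<and> norm (ivec k') < C' * norm (ivec (k n)) \<and>
           norm (ivec (k n)) / C' < \<bar>ivec k' \<bullet> \<omega>\<bar> \<and> \<bar>ivec k' \<bullet> \<omega>\<bar> < C' * norm (ivec (k n))"
    using small
  proof eventually_elim
    case (elim n)
    then have "norm (ivec (k n)) \<ge> 1" "2 * D * \<bar>C\<bar> \<le> norm (ivec (k n)) * norm \<omega>"
      using \<open>norm \<omega> > 0\<close> by (auto simp: pos_divide_le_eq)
    then show ?case
      using exists_orthogonal_ivec_strict[OF \<open>\<omega> \<noteq> 0\<close> _ _ _ C'_gt(2-5)[unfolded D_def]]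
        abs_le_abs_if_less_div_power[OF _ elim(2)] unfolding D_def by force
  qed
  then show ?thesis using C'_gt unfolding eventually_sequentially by blast
qed

end
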